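(* Let $(X,\widetilde{\tau},\mathfrak{a}_E,E)$ be a soft aura topological space. For every $(G,E)\in\mathrm{SS}(X,E)$, the transfinite sequence $(\mathrm{cl}_{\mathfrak{a}}^{\alpha}(G,E))_{\alpha}$ stabilizes at some ordinal $\gamma\le|X|$. The operator $\mathrm{cl}_{\mathfrak{a}}^{\infty}(G,E):=\mathrm{cl}_{\mathfrak{a}}^{\gamma}(G,E)$ is a soft Kuratowski closure operator, i.e. it satisfies $\mathrm{cl}_{\mathfrak{a}}^{\infty}(\widetilde{\Phi})=\widetilde{\Phi}$, $(G,E)\sqsubseteq\mathrm{cl}_{\mathfrak{a}}^{\infty}(G,E)$, $\mathrm{cl}_{\mathfrak{a}}^{\infty}((G,E)\sqcup(H,E))=\mathrm{cl}_{\mathfrak{a}}^{\infty}(G,E)\sqcup\mathrm{cl}_{\mathfrak{a}}^{\infty}(H,E)$, and $\mathrm{cl}_{\mathfrak{a}}^{\infty}(\mathrm{cl}_{\mathfrak{a}}^{\infty}(G,E))=\mathrm{cl}_{\mathfrak{a}}^{\infty}(G,E)$ for all $(G,E),(H,E)\in\mathrm{SS}(X,E)$.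
   Context: Let $X$ be a nonempty set and $E$ a nonempty parameter set. A soft set over $X$ is a map $F:E\to\mathcal{P}(X)$, written $(F,E)$; $\mathrm{SS}(X,E)$ denotes all soft sets. Operations ($\sqsubseteq$, soft union $\sqcup$ including arbitrary unions, etc.) are parameterwise; $\widetilde{\Phi}$ is the soft set with all values $\emptyset$. A soft topology $\widetilde{\tau}$ is a subfamily of $\mathrm{SS}(X,E)$ containing $\widetilde{\Phi}$ and the soft set with all values $X$, closed under arbitrary soft unions and finite soft intersections. A soft scope function is a map $\mathfrak{a}_E:X\to\widetilde{\tau}$ with $x\in\mathfrak{a}_E(x)(e)$ for all $x\in X$, $e\in E$; $(X,\widetilde{\tau},\mathfrak{a}_E,E)$ is a soft aura topological space. Soft aura-closure: $\mathrm{cl}_{\mathfrak{a}}(G,E)(e)=\{x\in X:\mathfrak{a}_E(x)(e)\cap G(e)\neq\emptyset\}$. Transfinite iterates: $\mathrm{cl}_{\mathfrak{a}}^0(G,E)=(G,E)$; $\mathrm{cl}_{\mathfrak{a}}^{\alpha+1}(G,E)=\mathrm{cl}_{\mathfrak{a}}(\mathrm{cl}_{\mathfrak{a}}^{\alpha}(G,E))$; $\mathrm{cl}_{\mathfrak{a}}^{\lambda}(G,E)=\bigsqcup_{\alpha<\lambda}\mathrm{cl}_{\mathfrak{a}}^{\alpha}(G,E)$ for limit ordinals $\lambda$. *)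

theory Defs
  imports Main
begin

text \<open>Soft sets over the universe X = UNIV :: 'x set with parameter set
  E = UNIV :: 'e set are maps 'e \<Rightarrow> 'x set.\<close>

type_synonym ('e, 'x) soft_set = "'e \<Rightarrow> 'x set"

definition soft_null :: "('e, 'x) soft_set" where
  "soft_null = (\<lambda>e. {})"

definition soft_absolute :: "('e, 'x) soft_set" where
  "soft_absolute = (\<lambda>e. UNIV)"

definition soft_subset :: "('e, 'x) soft_set \<Rightarrow> ('e, 'x) soft_set \<Rightarrow> bool" where
  "soft_subset F G \<longleftrightarrow> (\<forall>e. F e \<subseteq> G e)"

definition soft_union :: "('e, 'x) soft_set \<Rightarrow> ('e, 'x) soft_set \<Rightarrow> ('e, 'x) soft_set" where
  "soft_union F G = (\<lambda>e. F e \<union> G e)"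

definition soft_inter :: "('e, 'x) soft_set \<Rightarrow> ('e, 'x) soft_set \<Rightarrow> ('e, 'x) soft_set" where
  "soft_inter F G = (\<lambda>e. F e \<inter> G e)"

definition soft_Union :: "('e, 'x) soft_set set \<Rightarrow> ('e, 'x) soft_set" where
  "soft_Union S = (\<lambda>e. \<Union>F\<in>S. F e)"

definition soft_topology :: "('e, 'x) soft_set set \<Rightarrow> bool" where
  "soft_topology \<tau> \<longleftrightarrow>
     soft_null \<in> \<tau> \<and> soft_absolute \<in> \<tau> \<and>
     (\<forall>S. S \<subseteq> \<tau> \<longrightarrow> soft_Union S \<in> \<tau>) \<and>
     (\<forall>F\<in>\<tau>. \<forall>G\<in>\<tau>. soft_inter F G \<in> \<tau>)"

definition soft_aura_space :: "('e, 'x) soft_set set \<Rightarrow> ('x \<Rightarrow> ('e, 'x) soft_set) \<Rightarrow> bool" where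
  "soft_aura_space \<tau> a \<longleftrightarrow> soft_topology \<tau> \<and> (\<forall>x. a x \<in> \<tau> \<and> (\<forall>e. x \<in> a x e))"

definition soft_aura_cl :: "('x \<Rightarrow> ('e, 'x) soft_set) \<Rightarrow> ('e, 'x) soft_set \<Rightarrow> ('e, 'x) soft_set" where
  "soft_aura_cl a G = (\<lambda>e. {x. a x e \<inter> G e \<noteq> {}})"

text \<open>Transfinite iteration along a well-order r: the element i of Field r stands
  for the ordinal given by the order type of its strict initial segment.\<close>
definition soft_iter_step ::
  "('x \<Rightarrow> ('e, 'x) soft_set) \<Rightarrow> ('e, 'x) soft_set \<Rightarrow> 'b rel \<Rightarrow>
   ('b \<Rightarrow> ('e, 'x) soft_set) \<Rightarrow> 'b \<Rightarrow> ('e, 'x) soft_set" where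
  "soft_iter_step a G r f i =
     (if underS r i = {} then G
      else if (\<exists>j\<in>underS r i. \<forall>k\<in>underS r i. (k, j) \<in> r)
      then soft_aura_cl a (f (THE j. j \<in> underS r i \<and> (\<forall>k\<in>underS r i. (k, j) \<in> r)))
      else soft_Union (f ` underS r i))"

definition soft_iter ::
  "('x \<Rightarrow> ('e, 'x) soft_set) \<Rightarrow> ('e, 'x) soft_set \<Rightarrow> 'b rel \<Rightarrow> 'b \<Rightarrow> ('e, 'x) soft_set" where
  "soft_iter a G r = wfrec (r - Id) (soft_iter_step a G r)"

text \<open>Extend a well-order w by a new top element None; the top then
  represents the ordinal (order type) of w itself.\<close>
definition ext_top :: "'c rel \<Rightarrow> 'c option rel" where
  "ext_top w = {(Some x, Some y) | x y. (x, y) \<in> w} \<union>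
               {(z, None) | z. z = None \<or> (\<exists>x\<in>Field w. z = Some x)}"

text \<open>cl_a^alpha(G) where the ordinal alpha is the order type of the well-order w.\<close>
definition soft_cl_ord ::
  "('x \<Rightarrow> ('e, 'x) soft_set) \<Rightarrow> 'c rel \<Rightarrow> ('e, 'x) soft_set \<Rightarrow> ('e, 'x) soft_set" where
  "soft_cl_ord a w G = soft_iter a G (ext_top w) None"

definition soft_cl_inf ::
  "('x \<Rightarrow> ('e, 'x) soft_set) \<Rightarrow> ('e, 'x) soft_set \<Rightarrow> ('e, 'x) soft_set" where
  "soft_cl_inf a G = soft_cl_ord a
     (SOME \<gamma> :: 'x rel. Well_order \<gamma> \<and> (\<gamma>, card_of (UNIV :: 'x set)) \<in> ordLeq \<and>
        (\<forall>w :: 'x rel. Well_order w \<and> (\<gamma>, w) \<in> ordLeq \<longrightarrow> soft_cl_ord a w G = soft_cl_ord a \<gamma> G)) G"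

end

theory Submission
  imports Defs "HOL-Library.Order_Continuity"
begin

(* The aura closure cl is inflationary and commutes with soft unions, so its omega-th iterate
   cl^omega(G) = sup_n cl^n(G) is already a fixed point of cl. Hence the transfinite sequence is
   constant from omega on, and cl^alpha(G) depends only on min(|alpha|, omega). If X is finite,
   each parameterwise chain cl^n(G)(e) of subsets of X grows strictly until it stops, so it stops
   after at most |X| steps. So cl^alpha(G) = cl^omega(G) for every ordinal alpha >= |X|, and the
   Kuratowski axioms for cl^omega follow from the corresponding properties of cl together with
   the fixed-point property. *)

definition omega_closure :: "('a::complete_lattice \<Rightarrow> 'a) \<Rightarrow> 'a \<Rightarrow> 'a" where
  "omega_closure f x = (SUP n. (f ^^ n) x)"

lemma funpow_inflationary_mono:
  fixes f :: "'a::preorder \<Rightarrow> 'a"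
  assumes "\<And>x. x \<le> f x" and "m \<le> n"
  shows "(f ^^ m) x \<le> (f ^^ n) x"
  using \<open>m \<le> n\<close>
proof (induction n rule: dec_induct)
  case (step n)
  have "(f ^^ n) x \<le> (f ^^ Suc n) x" using assms(1) by simp
  with step.IH show ?case by (rule order_trans)
qed simp

lemma funpow_le_omega_closure: "(f ^^ n) x \<le> omega_closure f x"
  unfolding omega_closure_def by (rule SUP_upper) simp

lemma le_omega_closure: "x \<le> omega_closure f x"
  using funpow_le_omega_closure[where n = 0] by simp

lemma omega_closure_fixpoint:
  assumes "sup_continuous f" and "\<And>x. x \<le> f x"
  shows "f (omega_closure f x) = omega_closure f x"
proof (rule antisym)
  have "mono (\<lambda>n. (f ^^ n) x)"
    using funpow_inflationary_mono[OF assms(2)] by (rule monoI)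
  then have "f (omega_closure f x) = (SUP n. (f ^^ Suc n) x)"
    unfolding omega_closure_def by (simp add: sup_continuousD[OF assms(1)])
  also have "\<dots> \<le> omega_closure f x"
    by (rule SUP_least) (rule funpow_le_omega_closure)
  finally show "f (omega_closure f x) \<le> omega_closure f x" .
qed (rule assms(2))

lemma omega_closure_idem:
  assumes "sup_continuous f" and "\<And>x. x \<le> f x"
  shows "omega_closure f (omega_closure f x) = omega_closure f x"
proof -
  have "(f ^^ n) (omega_closure f x) = omega_closure f x" for n
    by (induction n) (simp_all add: omega_closure_fixpoint[OF assms])
  then show ?thesis
    unfolding omega_closure_def[of f "omega_closure f x"] by simp
qed

lemma omega_closure_bot:
  assumes "f bot = bot"
  shows "omega_closure f bot = bot"
proof -
  have "(f ^^ n) bot = bot" for n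
    by (induction n) (simp_all add: assms)
  then show ?thesis unfolding omega_closure_def by simp
qed

lemma omega_closure_sup:
  assumes "\<And>x y. f (sup x y) = sup (f x) (f y)"
  shows "omega_closure f (sup x y) = sup (omega_closure f x) (omega_closure f y)"
proof -
  have "(f ^^ n) (sup x y) = sup ((f ^^ n) x) ((f ^^ n) y)" for n
    by (induction n) (simp_all add: assms)
  then show ?thesis unfolding omega_closure_def by (simp add: SUP_sup_distrib)
qed

lemma funpow_inflationary_stabilizes:
  fixes \<phi> :: "'a set \<Rightarrow> 'a set"
  assumes fin: "finite (UNIV :: 'a set)" and infl: "\<And>X. X \<subseteq> \<phi> X"
  shows "(\<phi> ^^ n) X \<subseteq> (\<phi> ^^ card (UNIV :: 'a set)) X"
proof -
  let ?s = "\<lambda>n. (\<phi> ^^ n) X" and ?N = "card (UNIV :: 'a set)"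
  have grows_or_stops: "n \<le> card (?s n) \<or> ?s (Suc n) = ?s n" for n
  proof (induction n)
    case (Suc n)
    show ?case
    proof (cases "?s (Suc n) = ?s n")
      case False
      then have "?s n \<subset> ?s (Suc n)" using infl[of "?s n"] by auto
      then have "card (?s n) < card (?s (Suc n))"
        using fin by (meson finite_subset psubset_card_mono subset_UNIV)
      with False Suc.IH show ?thesis by simp
    qed simp
  qed simp
  have stop: "\<phi> (?s ?N) = ?s ?N"
  proof (cases "?N \<le> card (?s ?N)")
    case True
    with fin have "?s ?N = UNIV" by (intro card_seteq) auto
    moreover have "UNIV \<subseteq> \<phi> UNIV" by (rule infl)
    ultimately show ?thesis by auto
  qed (use grows_or_stops[of ?N] in simp)
  have stable: "?s (?N + k) = ?s ?N" for k
    by (induction k) (simp_all add: stop)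
  show ?thesis
  proof (cases "n \<le> ?N")
    case True
    then show ?thesis by (rule funpow_inflationary_mono[OF infl])
  next
    case False
    then have "?s n = ?s ?N" using stable[of "n - ?N"] by simp
    then show ?thesis by simp
  qed
qed

lemma soft_aura_cl_sup_continuous: "sup_continuous (soft_aura_cl a)"
  unfolding sup_continuous_def soft_aura_cl_def by (auto simp: fun_eq_iff)

lemma soft_aura_cl_inflationary:
  assumes "\<forall>x e. x \<in> a x e"
  shows "G \<le> soft_aura_cl a G"
  using assms unfolding soft_aura_cl_def le_fun_def by blast

lemma soft_aura_cl_bot: "soft_aura_cl a bot = bot"
  unfolding soft_aura_cl_def by (auto simp: fun_eq_iff)

lemma soft_aura_cl_sup: "soft_aura_cl a (sup G H) = sup (soft_aura_cl a G) (soft_aura_cl a H)"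
  unfolding soft_aura_cl_def by (auto simp: fun_eq_iff)

lemma soft_Union_eq_Sup: "soft_Union S = Sup S"
  unfolding soft_Union_def by (simp add: fun_eq_iff)

lemma funpow_soft_aura_cl_apply:
  "((soft_aura_cl a ^^ n) G) e = ((\<lambda>S. {x. a x e \<inter> S \<noteq> {}}) ^^ n) (G e)"
  by (induction n) (simp_all add: soft_aura_cl_def)

lemma omega_closure_soft_aura_cl_finite:
  fixes G :: "('e, 'x) soft_set"
  assumes scope: "\<forall>x e. x \<in> a x e" and fin: "finite (UNIV :: 'x set)"
  shows "omega_closure (soft_aura_cl a) G = (soft_aura_cl a ^^ card (UNIV :: 'x set)) G"
proof (rule antisym)
  have "(soft_aura_cl a ^^ n) G e \<subseteq> (soft_aura_cl a ^^ card (UNIV :: 'x set)) G e" for n e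
    unfolding funpow_soft_aura_cl_apply
    by (rule funpow_inflationary_stabilizes[OF fin]) (use scope in blast)
  then show "omega_closure (soft_aura_cl a) G \<le> (soft_aura_cl a ^^ card (UNIV :: 'x set)) G"
    unfolding omega_closure_def by (intro SUP_least) (simp add: le_fun_def)
qed (rule funpow_le_omega_closure)

text \<open>For an ordinal \<open>\<alpha>\<close> of cardinality \<open>|A|\<close> this is \<open>cl\<^sup>\<alpha>(G)\<close>:
  from \<open>\<omega>\<close> on, the iteration is constant.\<close>

definition soft_cl_card ::
  "('x \<Rightarrow> ('e, 'x) soft_set) \<Rightarrow> 'b set \<Rightarrow> ('e, 'x) soft_set \<Rightarrow> ('e, 'x) soft_set" where
  "soft_cl_card a A G =
     (if finite A then (soft_aura_cl a ^^ card A) G else omega_closure (soft_aura_cl a) G)"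

lemma soft_cl_card_empty: "soft_cl_card a {} G = G"
  unfolding soft_cl_card_def by simp

lemma soft_cl_card_insert:
  assumes scope: "\<forall>x e. x \<in> a x e" and "t \<notin> A"
  shows "soft_cl_card a (insert t A) G = soft_aura_cl a (soft_cl_card a A G)"
  using assms(2) unfolding soft_cl_card_def
  by (simp add: omega_closure_fixpoint[OF soft_aura_cl_sup_continuous soft_aura_cl_inflationary[OF scope]])

lemma soft_cl_card_le_omega_closure:
  "soft_cl_card a A G \<le> omega_closure (soft_aura_cl a) G"
  unfolding soft_cl_card_def by (simp add: funpow_le_omega_closure)

lemma funpow_le_soft_cl_card:
  assumes scope: "\<forall>x e. x \<in> a x e" and "finite S" "S \<subseteq> A"
  shows "(soft_aura_cl a ^^ card S) G \<le> soft_cl_card a A G"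
proof (cases "finite A")
  case True
  then have "card S \<le> card A" using card_mono \<open>S \<subseteq> A\<close> by blast
  then have "(soft_aura_cl a ^^ card S) G \<le> (soft_aura_cl a ^^ card A) G"
    by (rule funpow_inflationary_mono[OF soft_aura_cl_inflationary[OF scope]])
  with True show ?thesis unfolding soft_cl_card_def by simp
next
  case False
  then show ?thesis unfolding soft_cl_card_def by (simp add: funpow_le_omega_closure)
qed

lemma soft_cl_card_eq_omega_closure:
  fixes A :: "'b set" and G :: "('e, 'x) soft_set"
  assumes scope: "\<forall>x e. x \<in> a x e"
    and large: "(card_of (UNIV :: 'x set), card_of A) \<in> ordLeq"
  shows "soft_cl_card a A G = omega_closure (soft_aura_cl a) G"
proof (cases "finite A")
  case True
  then have fin: "finite (UNIV :: 'x set)" using card_of_ordLeq_finite[OF large] by blast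
  obtain f :: "'x \<Rightarrow> 'b" where "inj f" "range f \<subseteq> A"
    using large card_of_ordLeq[of "UNIV :: 'x set" A] by blast
  then have "card (UNIV :: 'x set) \<le> card A" using True card_inj_on_le by blast
  then have "(soft_aura_cl a ^^ card (UNIV :: 'x set)) G \<le> (soft_aura_cl a ^^ card A) G"
    by (rule funpow_inflationary_mono[OF soft_aura_cl_inflationary[OF scope]])
  with True have "omega_closure (soft_aura_cl a) G \<le> soft_cl_card a A G"
    by (simp add: omega_closure_soft_aura_cl_finite[OF scope fin] soft_cl_card_def)
  then show ?thesis using soft_cl_card_le_omega_closure by (rule antisym[rotated])
qed (simp add: soft_cl_card_def)

lemma underS_greatest_eq_insert:
  assumes "Well_order r" and t: "t \<in> underS r i" "\<forall>k\<in>underS r i. (k, t) \<in> r"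
  shows "underS r i = insert t (underS r t)"
proof -
  have "trans r" "antisym r"
    using assms(1) by (auto simp: well_order_on_def linear_order_on_def partial_order_on_def preorder_on_def)
  with t show ?thesis unfolding underS_def trans_def antisym_def by blast
qed

lemma finite_subset_underS_limit:
  assumes wo: "Well_order r" and ne: "underS r i \<noteq> {}"
    and limit: "\<not> (\<exists>j\<in>underS r i. \<forall>k\<in>underS r i. (k, j) \<in> r)"
    and S: "finite S" "S \<subseteq> underS r i"
  shows "\<exists>k\<in>underS r i. S \<subseteq> underS r k"
proof -
  have refl: "Refl r" and trans: "trans r" and antisym: "antisym r" and total: "Total r"
    using wo by (auto simp: well_order_on_def linear_order_on_def partial_order_on_def preorder_on_def)
  have refl_at: "(j, j) \<in> r" if "j \<in> underS r i" for j
    using refl underS_Field[OF that] unfolding refl_on_def by blast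
  have comparable: "(j, k) \<in> r \<or> (k, j) \<in> r" if "j \<in> underS r i" "k \<in> underS r i" for j k
    using total refl_at that underS_Field[OF that(1)] underS_Field[OF that(2)]
    unfolding total_on_def by metis
  have "\<exists>j\<in>underS r i. S \<subseteq> under r j"
    using S
  proof (induction S rule: finite_induct)
    case empty
    then show ?case using ne by blast
  next
    case (insert s S)
    then obtain j where j: "j \<in> underS r i" "S \<subseteq> under r j" by blast
    have s: "s \<in> underS r i" using insert.prems by blast
    show ?case
    proof (cases "(s, j) \<in> r")
      case True
      then show ?thesis using j unfolding under_def by blast
    next
      case False
      then have "(j, s) \<in> r" using comparable[OF s j(1)] by blast
      then have "under r j \<subseteq> under r s" using trans unfolding under_def trans_def by blast
      then show ?thesis using s j(2) refl_at[OF s] unfolding under_def by blast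
    qed
  qed
  then obtain j where j: "j \<in> underS r i" "S \<subseteq> under r j" by blast
  with limit obtain k where k: "k \<in> underS r i" "(k, j) \<notin> r" by blast
  then have "(j, k) \<in> r" "j \<noteq> k"
    using comparable[OF j(1) k(1)] refl_at[OF j(1)] by blast+
  then have "under r j \<subseteq> underS r k"
    using trans antisym unfolding under_def underS_def trans_def antisym_def by blast
  with j k show ?thesis by blast
qed

lemma soft_iter_unfold:
  assumes wo: "Well_order r"
  shows "soft_iter a G r i = soft_iter_step a G r (soft_iter a G r) i"
proof -
  have step_cong: "soft_iter_step a G r f i = soft_iter_step a G r g i"
    if "\<forall>j\<in>underS r i. f j = g j" for f g :: "'a \<Rightarrow> ('b, 'c) soft_set"
  proof -
    let ?P = "\<lambda>j. j \<in> underS r i \<and> (\<forall>k\<in>underS r i. (k, j) \<in> r)"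
    have "?P (THE j. ?P j)" if "\<exists>j. ?P j"
      by (rule theI') (use that wo_rel.ANTISYM[OF wo_rel.intro[OF wo]] in \<open>auto simp: antisym_def\<close>)
    then show ?thesis unfolding soft_iter_step_def using that by (auto simp: Bex_def image_def)
  qed
  have "soft_iter a G r i = soft_iter_step a G r (cut (soft_iter a G r) (r - Id) i) i"
    unfolding soft_iter_def by (rule wfrec[OF wo_rel.WF[OF wo_rel.intro[OF wo]]])
  also have "\<dots> = soft_iter_step a G r (soft_iter a G r) i"
    by (rule step_cong) (auto simp: underS_def cut_apply)
  finally show ?thesis .
qed

lemma infinite_underS_limit:
  assumes "Well_order r" and "underS r i \<noteq> {}"
    and "\<not> (\<exists>j\<in>underS r i. \<forall>k\<in>underS r i. (k, j) \<in> r)"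
  shows "infinite (underS r i)"
proof
  assume "finite (underS r i)"
  then obtain k where "k \<in> underS r i" "underS r i \<subseteq> underS r k"
    using finite_subset_underS_limit[OF assms] by blast
  then show False by (metis subsetD underS_notIn)
qed

lemma SUP_soft_cl_card_limit:
  assumes wo: "Well_order r" and scope: "\<forall>x e. x \<in> a x e"
    and limit: "underS r i \<noteq> {}" "\<not> (\<exists>j\<in>underS r i. \<forall>k\<in>underS r i. (k, j) \<in> r)"
  shows "(SUP j\<in>underS r i. soft_cl_card a (underS r j) G) = omega_closure (soft_aura_cl a) G"
proof (rule antisym)
  show "(SUP j\<in>underS r i. soft_cl_card a (underS r j) G) \<le> omega_closure (soft_aura_cl a) G"
    by (rule SUP_least) (rule soft_cl_card_le_omega_closure)
  show "omega_closure (soft_aura_cl a) G \<le> (SUP j\<in>underS r i. soft_cl_card a (underS r j) G)"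
    unfolding omega_closure_def
  proof (rule SUP_least)
    fix n
    obtain S where S: "finite S" "card S = n" "S \<subseteq> underS r i"
      using infinite_arbitrarily_large[OF infinite_underS_limit[OF wo limit]] by blast
    then obtain j where j: "j \<in> underS r i" "S \<subseteq> underS r j"
      using finite_subset_underS_limit[OF wo limit] by blast
    have "(soft_aura_cl a ^^ n) G \<le> soft_cl_card a (underS r j) G"
      using funpow_le_soft_cl_card[OF scope S(1) j(2)] S(2) by simp
    also have "\<dots> \<le> (SUP j\<in>underS r i. soft_cl_card a (underS r j) G)"
      using j(1) by (rule SUP_upper)
    finally show "(soft_aura_cl a ^^ n) G \<le> (SUP j\<in>underS r i. soft_cl_card a (underS r j) G)" .
  qed
qed

lemma soft_iter_eq_soft_cl_card:
  assumes wo: "Well_order r" and scope: "\<forall>x e. x \<in> a x e"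
  shows "soft_iter a G r i = soft_cl_card a (underS r i) G"
  using wo_rel.WF[OF wo_rel.intro[OF wo]]
proof (induction i rule: wf_induct_rule)
  case (less i)
  let ?f = "soft_iter a G r"
  have IH: "?f j = soft_cl_card a (underS r j) G" if "j \<in> underS r i" for j
    using less that unfolding underS_def by blast
  let ?P = "\<lambda>j. j \<in> underS r i \<and> (\<forall>k\<in>underS r i. (k, j) \<in> r)"
  consider (zero) "underS r i = {}"
    | (succ) t where "t \<in> underS r i" "\<forall>k\<in>underS r i. (k, t) \<in> r"
    | (limit) "underS r i \<noteq> {}" "\<not> (\<exists>j\<in>underS r i. \<forall>k\<in>underS r i. (k, j) \<in> r)"
    by blast
  then show ?case
  proof cases
    case zero
    then show ?thesis by (subst soft_iter_unfold[OF wo]) (simp add: soft_iter_step_def soft_cl_card_empty)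
  next
    case (succ t)
    then have "(THE j. ?P j) = t"
      using wo_rel.ANTISYM[OF wo_rel.intro[OF wo]] by (auto simp: antisym_def)
    with succ have "?f i = soft_aura_cl a (?f t)"
      by (subst soft_iter_unfold[OF wo]) (auto simp: soft_iter_step_def)
    also have "\<dots> = soft_cl_card a (insert t (underS r t)) G"
      using IH[OF succ(1)] by (simp add: soft_cl_card_insert[OF scope] underS_notIn)
    also have "insert t (underS r t) = underS r i"
      using underS_greatest_eq_insert[OF wo succ] by simp
    finally show ?thesis .
  next
    case limit
    then have "?f i = (SUP j\<in>underS r i. ?f j)"
      by (subst soft_iter_unfold[OF wo]) (auto simp: soft_iter_step_def soft_Union_eq_Sup)
    also have "\<dots> = (SUP j\<in>underS r i. soft_cl_card a (underS r j) G)"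
      using IH by (rule SUP_cong[OF refl])
    also have "\<dots> = omega_closure (soft_aura_cl a) G"
      by (rule SUP_soft_cl_card_limit[OF wo scope limit])
    also have "\<dots> = soft_cl_card a (underS r i) G"
      using infinite_underS_limit[OF wo limit] by (simp add: soft_cl_card_def)
    finally show ?thesis .
  qed
qed

lemma underS_ext_top_None: "underS (ext_top w) None = Some ` Field w"
  unfolding ext_top_def underS_def by auto

lemma Well_order_ext_top:
  assumes wo: "Well_order w"
  shows "Well_order (ext_top w)"
proof -
  have refl: "Refl w" and trans: "trans w" and antisym: "antisym w" and total: "Total w"
    using wo by (auto simp: well_order_on_def linear_order_on_def partial_order_on_def preorder_on_def)
  have Field: "Field (ext_top w) = insert None (Some ` Field w)"
    unfolding ext_top_def Field_def by (auto; blast)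
  have "ext_top w - Id = map_prod Some Some ` (w - Id) \<union> {(Some x, None) | x. x \<in> Field w}"
    unfolding ext_top_def by auto
  moreover have "wf (map_prod Some Some ` (w - Id))"
    by (rule wf_map_prod_image[OF wo_rel.WF[OF wo_rel.intro[OF wo]]]) (simp add: inj_def)
  moreover have "wf {(Some x, None :: 'a option) | x. x \<in> Field w}"
    by (rule wf_no_loop) auto
  ultimately have "wf (ext_top w - Id)"
    by (auto intro: wf_Un)
  moreover have "Refl (ext_top w)" "Total (ext_top w)"
    using refl total unfolding refl_on_def total_on_def Field by (auto simp: ext_top_def)
  moreover have "trans (ext_top w)" "antisym (ext_top w)"
    using trans antisym unfolding trans_def antisym_def ext_top_def by (auto simp: Field_def)
  ultimately show ?thesis
    unfolding well_order_on_def linear_order_on_def partial_order_on_def preorder_on_def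
    by (auto intro: FieldI1 FieldI2)
qed

lemma soft_cl_ord_eq_soft_cl_card:
  assumes "Well_order w" and "\<forall>x e. x \<in> a x e"
  shows "soft_cl_ord a w G = soft_cl_card a (Field w) G"
proof -
  have "soft_cl_ord a w G = soft_cl_card a (Some ` Field w) G"
    unfolding soft_cl_ord_def soft_iter_eq_soft_cl_card[OF Well_order_ext_top[OF assms(1)] assms(2)]
      underS_ext_top_None ..
  also have "\<dots> = soft_cl_card a (Field w) G"
    by (simp add: soft_cl_card_def finite_image_iff card_image)
  finally show ?thesis .
qed

lemma soft_cl_ord_eq_omega_closure:
  fixes w :: "'b rel" and G :: "('e, 'x) soft_set"
  assumes "Well_order w" and scope: "\<forall>x e. x \<in> a x e"
    and large: "(card_of (UNIV :: 'x set), w) \<in> ordLeq"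
  shows "soft_cl_ord a w G = omega_closure (soft_aura_cl a) G"
proof -
  have "(card_of (UNIV :: 'x set), card_of (Field w)) \<in> ordLeq"
    using card_of_mono2[OF large] by (simp only: Field_card_of)
  then show ?thesis
    by (simp add: soft_cl_ord_eq_soft_cl_card[OF assms(1) scope] soft_cl_card_eq_omega_closure[OF scope])
qed

lemma soft_cl_ord_stable:
  fixes G :: "('e, 'x) soft_set"
  assumes scope: "\<forall>x e. x \<in> a x e"
  shows "\<forall>w :: 'b rel. Well_order w \<and> (card_of (UNIV :: 'x set), w) \<in> ordLeq \<longrightarrow>
           soft_cl_ord a w G = soft_cl_ord a (card_of (UNIV :: 'x set)) G"
proof (intro allI impI)
  let ?U = "card_of (UNIV :: 'x set)"
  fix w :: "'b rel"
  assume "Well_order w \<and> (?U, w) \<in> ordLeq"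
  then have "soft_cl_ord a w G = omega_closure (soft_aura_cl a) G"
    by (intro soft_cl_ord_eq_omega_closure[OF _ scope]) auto
  also have "\<dots> = soft_cl_ord a ?U G"
    by (rule soft_cl_ord_eq_omega_closure[OF card_of_Well_order scope ordLeq_reflexive, symmetric])
      (rule card_of_Well_order)
  finally show "soft_cl_ord a w G = soft_cl_ord a ?U G" .
qed

lemma soft_cl_inf_eq_omega_closure:
  fixes G :: "('e, 'x) soft_set"
  assumes scope: "\<forall>x e. x \<in> a x e"
  shows "soft_cl_inf a G = omega_closure (soft_aura_cl a) G"
proof -
  let ?U = "card_of (UNIV :: 'x set)"
  let ?stable = "\<lambda>\<gamma> :: 'x rel. Well_order \<gamma> \<and> (\<gamma>, ?U) \<in> ordLeq \<and>
        (\<forall>w :: 'x rel. Well_order w \<and> (\<gamma>, w) \<in> ordLeq \<longrightarrow>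
           soft_cl_ord a w G = soft_cl_ord a \<gamma> G)"
  have U: "Well_order ?U" "(?U, ?U) \<in> ordLeq"
    using card_of_Well_order ordLeq_reflexive by blast+
  then have "?stable ?U"
    using soft_cl_ord_stable[OF scope] by blast
  then have "?stable (SOME \<gamma>. ?stable \<gamma>)" by (rule someI)
  then have "soft_cl_ord a ?U G = soft_cl_ord a (SOME \<gamma>. ?stable \<gamma>) G"
    using U(1) by blast
  also have "\<dots> = soft_cl_inf a G"
    unfolding soft_cl_inf_def ..
  finally show ?thesis using soft_cl_ord_eq_omega_closure[OF U(1) scope U(2)] by simp
qed

theorem theorem3p16:
  fixes \<tau> :: "('e, 'x) soft_set set"
    and a :: "'x \<Rightarrow> ('e, 'x) soft_set"
  assumes "soft_aura_space \<tau> a"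
  shows "(\<forall>G :: ('e, 'x) soft_set. \<exists>\<gamma> :: 'x rel.
            Well_order \<gamma> \<and> (\<gamma>, card_of (UNIV :: 'x set)) \<in> ordLeq \<and>
            (\<forall>w :: 'b rel. Well_order w \<and> (\<gamma>, w) \<in> ordLeq \<longrightarrow>
               soft_cl_ord a w G = soft_cl_ord a \<gamma> G))
       \<and> soft_cl_inf a soft_null = soft_null
       \<and> (\<forall>G. soft_subset G (soft_cl_inf a G))
       \<and> (\<forall>G H. soft_cl_inf a (soft_union G H) = soft_union (soft_cl_inf a G) (soft_cl_inf a H))
       \<and> (\<forall>G. soft_cl_inf a (soft_cl_inf a G) = soft_cl_inf a G)"
proof -
  have scope: "\<forall>x e. x \<in> a x e" using assms unfolding soft_aura_space_def by blast
  have stabilizes: "\<exists>\<gamma> :: 'x rel. Well_order \<gamma> \<and> (\<gamma>, card_of (UNIV :: 'x set)) \<in> ordLeq \<and>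
            (\<forall>w :: 'b rel. Well_order w \<and> (\<gamma>, w) \<in> ordLeq \<longrightarrow>
               soft_cl_ord a w G = soft_cl_ord a \<gamma> G)"
    for G :: "('e, 'x) soft_set"
    by (intro exI[of _ "card_of UNIV"] conjI card_of_Well_order ordLeq_reflexive
        soft_cl_ord_stable[OF scope])
  have cl_inf: "soft_cl_inf a = omega_closure (soft_aura_cl a)"
    using soft_cl_inf_eq_omega_closure[OF scope] by blast
  have soft_ops: "soft_null = bot" "soft_union = sup" "soft_subset = (\<le>)"
    by (auto simp: fun_eq_iff soft_null_def soft_union_def soft_subset_def le_fun_def)
  show ?thesis
    unfolding cl_inf soft_ops
    by (simp add: stabilizes le_omega_closure omega_closure_bot[of "soft_aura_cl a", OF soft_aura_cl_bot]
        omega_closure_sup[of "soft_aura_cl a", OF soft_aura_cl_sup]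
        omega_closure_idem[OF soft_aura_cl_sup_continuous soft_aura_cl_inflationary[OF scope]])
qed

end
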